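(* Let $1\le k\le d$ and $\alpha\ge1$. Let $c$ be a map that sends every finite point set $P\subset\mathbb{R}^d$ to a subset $c(P)\subseteq P$ such that, for every such $P$, $c(P)$ is an $\alpha$-approximate core-set for the $k$-directional height of $P$. Then $c$ is an $\alpha^{2k}$-composable core-set for determinant maximization with parameter $k$: for every integer $m\ge1$ and all finite point sets $P_1,\dots,P_m\subset\mathbb{R}^d$, $$\mathrm{MAXDET}_k\Big(\bigcup_{i=1}^m c(P_i)\Big)\ge\frac{1}{\alpha^{2k}}\,\mathrm{MAXDET}_k\Big(\bigcup_{i=1}^m P_i\Big).$$
   Context: For a finite set $S\subset\mathbb{R}^d$ with $|S|=k$, let $M_S$ be the $k\times d$ matrix whose rows are the points of $S$. For finite $P\subset\mathbb{R}^d$, $\mathrm{MAXDET}_k(P)=\max_{S\subseteq P,\,|S|=k}\det(M_SM_S^\top)$. Let $\mathcal{H}_{k-1}$ be the set of all $(k-1)$-dimensional linear subspaces of $\mathbb{R}^d$, and $\mathrm{dist}(p,\mathcal{H})$ the Euclidean distance from point $p$ to subspace $\mathcal{H}$. The $k$-directional height of $P$ with respect to $\mathcal{H}\in\mathcal{H}_{k-1}$ is $h(P,\mathcal{H})=\max_{p\in P}\mathrm{dist}(p,\mathcal{H})$. A subset $C\subseteq P$ is an $\alpha$-approximate core-set for the $k$-directional height of $P$ if $h(C,\mathcal{H})\ge h(P,\mathcal{H})/\alpha$ for every $\mathcal{H}\in\mathcal{H}_{k-1}$. *)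

theory Defs
  imports "HOL-Analysis.Analysis"
begin

text \<open>Points of R^d are elements of a euclidean_space 'a, with d = DIM('a).
  For a list xs of k points (the rows of M_S), det(M_S M_S^T) is the determinant
  of the k x k Gram matrix (xs!i \<bullet> xs!j), written out by the Leibniz formula.\<close>

definition gram_det :: "'a::euclidean_space list \<Rightarrow> real" where
  "gram_det xs = (\<Sum>p | p permutes {..<length xs}.
       of_int (sign p) * (\<Prod>i<length xs. (xs ! i) \<bullet> (xs ! (p i))))"

text \<open>MAXDET_k(P): maximum over k-element subsets S of P (enumerated by a distinct list;
  the Gram determinant does not depend on the enumeration). Convention: 0 if P has fewer
  than k points.\<close>

definition maxdet :: "nat \<Rightarrow> 'a::euclidean_space set \<Rightarrow> real" where
  "maxdet k P = (let D = {gram_det xs | xs. distinct xs \<and> set xs \<subseteq> P \<and> length xs = k}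
                 in if D = {} then 0 else Max D)"

definition dir_height :: "'a::euclidean_space set \<Rightarrow> 'a set \<Rightarrow> real" where
  "dir_height P H = (if P = {} then 0 else Max ((\<lambda>p. infdist p H) ` P))"

definition approx_coreset_height :: "real \<Rightarrow> nat \<Rightarrow> 'a::euclidean_space set \<Rightarrow> 'a set \<Rightarrow> bool" where
  "approx_coreset_height \<alpha> k C P \<longleftrightarrow> C \<subseteq> P \<and>
     (\<forall>H. subspace H \<and> dim H = k - 1 \<longrightarrow> dir_height C H \<ge> dir_height P H / \<alpha>)"

end

theory Submission
  imports Defs "Jordan_Normal_Form.Determinant"
begin

text \<open>The Gram determinant obeys the base-times-height rule
  gram_det (x # ys) = dist(x, span ys)^2 * gram_det ys.
  Take an optimal k-list xs in the union of the P i and replace its points one at a time.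
  The other k - 1 points of the current list span a (k-1)-dimensional subspace H, and the point
  x being replaced lies in some P i, whose core-set contains q with dist(q, H) \<ge> dist(x, H) / \<alpha>.
  Replacing x by q loses at most a factor \<alpha>^2, so after k exchanges the list lies in the union of
  the core-sets and has lost at most \<alpha>^(2k). That union is itself a height core-set of the union
  of the P i, since a maximum over a union is a maximum over one of its parts.\<close>

text \<open>The mixed Gram matrix (L ! i \<bullet> R ! j) allows row operations on L that leave R untouched.\<close>

definition gram_mat :: "'a::real_inner list \<Rightarrow> 'a list \<Rightarrow> real mat" where
  "gram_mat L R = mat (length L) (length L) (\<lambda>(i, j). L ! i \<bullet> R ! j)"

lemma gram_mat_carrier [simp]: "gram_mat L R \<in> carrier_mat (length L) (length L)"
  by (simp add: gram_mat_def)

lemma gram_mat_index [simp]: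
  "i < length L \<Longrightarrow> j < length L \<Longrightarrow> gram_mat L R $$ (i, j) = L ! i \<bullet> R ! j"
  by (simp add: gram_mat_def)

lemma transpose_gram_mat: "length R = length L \<Longrightarrow> (gram_mat L R)\<^sup>T = gram_mat R L"
  by (rule eq_matI) (auto simp: gram_mat_def inner_commute)

lemma gram_det_eq_det_gram_mat: "gram_det xs = Determinant.det (gram_mat xs xs)"
  by (simp add: gram_det_def det_def'[OF gram_mat_carrier] atLeast0LessThan)

subsection \<open>Base times height\<close>

lemma det_gram_mat_Cons_linear:
  fixes ys R :: "'a::real_inner list"
  assumes "length R = Suc (length ys)"
  shows "\<exists>V. \<forall>u. Determinant.det (gram_mat (u # ys) R) = u \<bullet> V"
proof -
  let ?n = "Suc (length ys)"
  define K where "K p = (\<Prod>i = Suc 0..<?n. ys ! (i - 1) \<bullet> R ! p i)" for p :: "nat \<Rightarrow> nat"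
  define V where "V = (\<Sum>p | p permutes {0..<?n}. (of_int (sign p) * K p) *\<^sub>R R ! p 0)"
  have "Determinant.det (gram_mat (u # ys) R) = u \<bullet> V" for u
  proof -
    have "Determinant.det (gram_mat (u # ys) R) =
      (\<Sum>p | p permutes {0..<?n}. of_int (sign p) * (\<Prod>i = 0..<?n. gram_mat (u # ys) R $$ (i, p i)))"
      using det_def'[OF gram_mat_carrier, of "u # ys" R] by simp
    also have "\<dots> = (\<Sum>p | p permutes {0..<?n}. of_int (sign p) * ((u \<bullet> R ! p 0) * K p))"
    proof (rule sum.cong[OF refl])
      fix p assume "p \<in> {p. p permutes {0..<?n}}"
      then have p_lt: "i < ?n \<Longrightarrow> p i < ?n" for i
        using permutes_in_image by fastforce
      have "(\<Prod>i = 0..<?n. gram_mat (u # ys) R $$ (i, p i))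
          = gram_mat (u # ys) R $$ (0, p 0) * (\<Prod>i = Suc 0..<?n. gram_mat (u # ys) R $$ (i, p i))"
        by (simp add: prod.atLeast_Suc_lessThan)
      also have "(\<Prod>i = Suc 0..<?n. gram_mat (u # ys) R $$ (i, p i)) = K p"
        unfolding K_def by (rule prod.cong[OF refl]) (auto simp: p_lt nth_Cons')
      finally show "of_int (sign p) * (\<Prod>i = 0..<?n. gram_mat (u # ys) R $$ (i, p i))
          = of_int (sign p) * ((u \<bullet> R ! p 0) * K p)"
        using p_lt[of 0] by simp
    qed
    also have "\<dots> = u \<bullet> V"
      unfolding V_def inner_sum_right by (rule sum.cong[OF refl]) (simp add: algebra_simps)
    finally show ?thesis .
  qed
  then show ?thesis by blast
qed

lemma det_gram_mat_Cons_add_span: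
  fixes ys R :: "'a::real_inner list"
  assumes "length R = Suc (length ys)" and "y \<in> span (set ys)"
  shows "Determinant.det (gram_mat ((y + w) # ys) R) = Determinant.det (gram_mat (w # ys) R)"
proof -
  obtain V where V: "\<And>u. Determinant.det (gram_mat (u # ys) R) = u \<bullet> V"
    using det_gram_mat_Cons_linear[OF assms(1)] by blast
  \<comment> \<open>V is orthogonal to ys, because a repeated row makes the determinant vanish.\<close>
  have "z \<bullet> V = 0" if "z \<in> set ys" for z
  proof -
    obtain j where j: "j < length ys" "ys ! j = z"
      using \<open>z \<in> set ys\<close> by (auto simp: in_set_conv_nth)
    have "Matrix.row (gram_mat (z # ys) R) 0 = Matrix.row (gram_mat (z # ys) R) (Suc j)"
      using j by (intro eq_vecI) (auto simp: gram_mat_def)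
    then have "Determinant.det (gram_mat (z # ys) R) = 0"
      using j by (intro det_identical_rows[OF gram_mat_carrier, of 0 "Suc j"]) auto
    then show ?thesis
      using V by simp
  qed
  then have "y \<bullet> V = 0"
    using orthogonal_to_span[OF assms(2), of V] by (simp add: real_inner_class.orthogonal_def inner_commute)
  then show ?thesis
    using V by (simp add: inner_add_left)
qed

lemma det_gram_mat_Cons_orthogonal:
  fixes ys :: "'a::real_inner list"
  assumes "y \<in> span (set ys)" and "\<And>z. z \<in> span (set ys) \<Longrightarrow> w \<bullet> z = 0"
  shows "Determinant.det (gram_mat ((y + w) # ys) ((y + w) # ys))
       = (w \<bullet> w) * Determinant.det (gram_mat ys ys)"
proof -
  let ?x = "y + w" and ?G = "gram_mat (w # ys) (w # ys)"
  have minor: "mat_delete ?G 0 0 = gram_mat ys ys"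
    by (rule eq_matI) (auto simp: mat_delete_def gram_mat_def)
  have "Determinant.det (gram_mat (?x # ys) (?x # ys)) = Determinant.det (gram_mat (w # ys) (?x # ys))"
    by (rule det_gram_mat_Cons_add_span[OF _ assms(1)]) simp
  also have "\<dots> = Determinant.det (gram_mat (?x # ys) (w # ys))"
    using det_transpose[OF gram_mat_carrier, of "w # ys" "?x # ys"] transpose_gram_mat[of "?x # ys" "w # ys"]
    by simp
  also have "\<dots> = Determinant.det ?G"
    by (rule det_gram_mat_Cons_add_span[OF _ assms(1)]) simp
  also have "\<dots> = (\<Sum>j<Suc (length ys). ?G $$ (0, j) * cofactor ?G 0 j)"
    using laplace_expansion_row[OF gram_mat_carrier[of "w # ys" "w # ys"], of 0] by simp
  also have "\<dots> = ?G $$ (0, 0) * cofactor ?G 0 0"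
    unfolding sum.lessThan_Suc_shift using assms(2)[OF span_base] by (simp add: nth_mem)
  also have "cofactor ?G 0 0 = Determinant.det (gram_mat ys ys)"
    by (simp add: cofactor_def minor)
  finally show ?thesis
    by simp
qed

lemma infdist_add_orthogonal_span:
  fixes S :: "'a::euclidean_space set"
  assumes "y \<in> span S" and "\<And>z. z \<in> span S \<Longrightarrow> w \<bullet> z = 0"
  shows "infdist (y + w) (span S) = norm w"
proof (rule antisym)
  show "infdist (y + w) (span S) \<le> norm w"
    using infdist_le[OF assms(1), of "y + w"] by (simp add: dist_norm)
  obtain z where z: "z \<in> span S" "infdist (y + w) (span S) = dist (y + w) z"
    using infdist_attains_inf[OF closed_subspace[OF subspace_span], of S "y + w"] span_zero by blast
  have "real_inner_class.orthogonal w (y - z)"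
    using z(1) assms by (simp add: span_diff real_inner_class.orthogonal_def)
  then have "(norm (w + (y - z)))\<^sup>2 = (norm w)\<^sup>2 + (norm (y - z))\<^sup>2"
    by (rule norm_add_Pythagorean)
  then have "(norm w)\<^sup>2 \<le> (norm (w + (y - z)))\<^sup>2"
    by simp
  then have "norm w \<le> norm (w + (y - z))"
    by (simp add: power_mono_iff)
  then show "norm w \<le> infdist (y + w) (span S)"
    using z(2) by (simp add: dist_norm algebra_simps)
qed

lemma gram_det_Cons:
  fixes x :: "'a::euclidean_space"
  shows "gram_det (x # ys) = (infdist x (span (set ys)))\<^sup>2 * gram_det ys"
proof -
  obtain y w where y: "y \<in> span (set ys)" and x: "x = y + w"
    and w: "\<And>z. z \<in> span (set ys) \<Longrightarrow> real_inner_class.orthogonal w z"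
    using orthogonal_subspace_decomp_exists by blast
  have w_perp: "\<And>z. z \<in> span (set ys) \<Longrightarrow> w \<bullet> z = 0"
    using w by (simp add: real_inner_class.orthogonal_def)
  have "gram_det (x # ys) = (w \<bullet> w) * gram_det ys"
    unfolding gram_det_eq_det_gram_mat x by (rule det_gram_mat_Cons_orthogonal[OF y w_perp])
  also have "w \<bullet> w = (infdist x (span (set ys)))\<^sup>2"
    using infdist_add_orthogonal_span[OF y w_perp] x by (simp add: power2_norm_eq_inner)
  finally show ?thesis .
qed

lemma gram_det_Nil [simp]: "gram_det [] = 1"
  by (simp add: gram_det_def)

lemma gram_det_nonneg: "0 \<le> gram_det (xs :: 'a::euclidean_space list)"
  by (induction xs) (auto simp: gram_det_Cons)

lemma dim_set_eq_length_if_gram_det_nonzero: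
  fixes xs :: "'a::euclidean_space list"
  shows "gram_det xs \<noteq> 0 \<Longrightarrow> dim (set xs) = length xs"
proof (induction xs)
  case (Cons x ys)
  then have "infdist x (span (set ys)) \<noteq> 0" and "gram_det ys \<noteq> 0"
    by (auto simp: gram_det_Cons)
  then have "x \<notin> span (set ys)"
    using infdist_le[of x "span (set ys)" x] infdist_nonneg[of x] by force
  then show ?case
    using Cons.IH \<open>gram_det ys \<noteq> 0\<close> by (simp add: dim_insert)
qed simp

lemma distinct_if_gram_det_nonzero:
  fixes xs :: "'a::euclidean_space list"
  assumes "gram_det xs \<noteq> 0"
  shows "distinct xs"
proof -
  have "length xs = dim (set xs)"
    using dim_set_eq_length_if_gram_det_nonzero[OF assms] by simp
  also have "\<dots> \<le> card (set xs)"
    by (rule dim_le_card) (auto intro: span_base)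
  finally show ?thesis
    using card_length[of xs] by (intro card_distinct) linarith
qed

subsection \<open>Invariance under reordering\<close>

lemma gram_det_permute_list:
  fixes xs :: "'a::euclidean_space list"
  assumes "p permutes {..<length xs}"
  shows "gram_det (permute_list p xs) = gram_det xs"
proof -
  let ?n = "length xs" and ?A = "gram_mat xs xs"
  have p: "p permutes {0..<?n}"
    using assms by (simp add: atLeast0LessThan)
  have p_lt: "i < ?n \<Longrightarrow> p i < ?n" for i
    using permutes_in_image[OF p] by simp
  define B where "B = mat ?n ?n (\<lambda>(i, j). ?A $$ (p i, j))"
  define C where "C = mat ?n ?n (\<lambda>(i, j). B\<^sup>T $$ (p i, j))"
  have B: "B \<in> carrier_mat ?n ?n"
    by (simp add: B_def)
  have det_B: "Determinant.det B = of_int (sign p) * Determinant.det ?A"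
    unfolding B_def by (rule det_permute_rows[OF gram_mat_carrier p])
  have det_C: "Determinant.det C = of_int (sign p) * Determinant.det B\<^sup>T"
    unfolding C_def by (rule det_permute_rows[OF _ p]) (simp add: B)
  have "gram_mat (permute_list p xs) (permute_list p xs) = C\<^sup>T"
    by (rule eq_matI) (auto simp: gram_mat_def C_def B_def permute_list_def p_lt)
  then have "gram_det (permute_list p xs) = Determinant.det C"
    using det_transpose[of C ?n] by (simp add: gram_det_eq_det_gram_mat C_def)
  also have "\<dots> = (of_int (sign p))\<^sup>2 * Determinant.det ?A"
    using det_B det_C det_transpose[OF B] by (simp add: power2_eq_square)
  also have "(of_int (sign p) :: real)\<^sup>2 = 1"
    by (simp add: sign_def)
  finally show ?thesis
    by (simp add: gram_det_eq_det_gram_mat)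
qed

lemma gram_det_mset_eq:
  fixes xs ys :: "'a::euclidean_space list"
  assumes "mset xs = mset ys"
  shows "gram_det xs = gram_det ys"
proof -
  obtain p where "p permutes {..<length ys}" "permute_list p ys = xs"
    using mset_eq_permutation[OF assms] by blast
  then show ?thesis
    using gram_det_permute_list by metis
qed

lemma finite_gram_dets:
  assumes "finite A"
  shows "finite {gram_det xs | xs. distinct xs \<and> set xs \<subseteq> A \<and> length xs = k}"
proof -
  have "{gram_det xs | xs. distinct xs \<and> set xs \<subseteq> A \<and> length xs = k}
      \<subseteq> gram_det ` {xs. set xs \<subseteq> A \<and> length xs = k}"
    by blast
  then show ?thesis
    by (rule finite_surj[OF finite_lists_length_eq[OF assms]])
qed

lemma gram_det_le_maxdet:
  assumes "finite A" "distinct xs" "set xs \<subseteq> A" "length xs = k"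
  shows "gram_det xs \<le> maxdet k A"
proof -
  let ?D = "{gram_det xs | xs. distinct xs \<and> set xs \<subseteq> A \<and> length xs = k}"
  have xs: "gram_det xs \<in> ?D"
    using assms(2-4) by blast
  then have "maxdet k A = Max ?D"
    by (auto simp: maxdet_def Let_def)
  then show ?thesis
    using Max_ge[OF finite_gram_dets[OF assms(1)] xs] by simp
qed

lemma maxdet_nonneg:
  fixes A :: "'a::euclidean_space set"
  assumes "finite A"
  shows "0 \<le> maxdet k A"
proof (cases "\<exists>xs. distinct xs \<and> set xs \<subseteq> A \<and> length xs = k")
  case True
  then obtain xs where "distinct xs" "set xs \<subseteq> A" "length xs = k"
    by blast
  then show ?thesis
    using gram_det_le_maxdet[OF assms] gram_det_nonneg[of xs] by fastforce
qed (simp add: maxdet_def)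

lemma maxdet_attained:
  assumes "finite A" "maxdet k A \<noteq> 0"
  shows "\<exists>xs. distinct xs \<and> set xs \<subseteq> A \<and> length xs = k \<and> maxdet k A = gram_det xs"
proof -
  let ?D = "{gram_det xs | xs. distinct xs \<and> set xs \<subseteq> A \<and> length xs = k}"
  have "?D \<noteq> {}" and maxdet_eq: "maxdet k A = Max ?D"
    using assms(2) by (auto simp: maxdet_def Let_def split: if_splits)
  then have "Max ?D \<in> ?D"
    using Max_in[OF finite_gram_dets[OF assms(1)]] by blast
  then obtain xs where "distinct xs \<and> set xs \<subseteq> A \<and> length xs = k" "Max ?D = gram_det xs"
    by blast
  then show ?thesis
    using maxdet_eq by auto
qed

lemma infdist_le_dir_height:
  assumes "finite P" "x \<in> P"
  shows "infdist x H \<le> dir_height P H"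
  using assms by (auto simp: dir_height_def intro!: Max_ge)

lemma dir_height_attained:
  assumes "finite P" "P \<noteq> {}"
  shows "\<exists>q\<in>P. dir_height P H = infdist q H"
proof -
  have "Max ((\<lambda>p. infdist p H) ` P) \<in> (\<lambda>p. infdist p H) ` P"
    using assms by (intro Max_in) auto
  then show ?thesis
    using assms(2) by (auto simp: dir_height_def)
qed

lemma dir_height_mono:
  assumes "finite B" "A \<subseteq> B"
  shows "dir_height A H \<le> dir_height B H"
proof (cases "A = {}")
  case True
  show ?thesis
  proof (cases "B = {}")
    case False
    then obtain b where "b \<in> B"
      by blast
    then show ?thesis
      using \<open>A = {}\<close> infdist_le_dir_height[OF assms(1) \<open>b \<in> B\<close>, of H] infdist_nonneg[of b H]
      by (simp add: dir_height_def[of "{}"])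
  qed (use True in \<open>simp add: dir_height_def\<close>)
next
  case False
  then obtain q where "q \<in> A" "dir_height A H = infdist q H"
    using dir_height_attained assms finite_subset by metis
  then show ?thesis
    using assms infdist_le_dir_height by auto
qed

lemma approx_coreset_height_UN:
  fixes C P :: "'i \<Rightarrow> 'a::euclidean_space set"
  assumes "finite I" "0 \<le> \<alpha>"
    and "\<And>i. i \<in> I \<Longrightarrow> finite (P i)"
    and "\<And>i. i \<in> I \<Longrightarrow> approx_coreset_height \<alpha> k (C i) (P i)"
  shows "approx_coreset_height \<alpha> k (\<Union>i\<in>I. C i) (\<Union>i\<in>I. P i)"
  unfolding approx_coreset_height_def
proof (intro conjI allI impI)
  show "(\<Union>i\<in>I. C i) \<subseteq> (\<Union>i\<in>I. P i)"
    using assms(4) by (fastforce simp: approx_coreset_height_def)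
  fix H :: "'a set"
  assume H: "subspace H \<and> dim H = k - 1"
  have fin: "finite (\<Union>i\<in>I. P i)"
    using assms(1,3) by auto
  then have fin_C: "finite (\<Union>i\<in>I. C i)"
    using \<open>(\<Union>i\<in>I. C i) \<subseteq> _\<close> finite_subset by blast
  show "dir_height (\<Union>i\<in>I. P i) H / \<alpha> \<le> dir_height (\<Union>i\<in>I. C i) H"
  proof (cases "(\<Union>i\<in>I. P i) = {}")
    case True
    then show ?thesis
      using \<open>(\<Union>i\<in>I. C i) \<subseteq> _\<close> by (simp add: dir_height_def)
  next
    case False
    then obtain q i where i: "i \<in> I" "q \<in> P i" and q: "dir_height (\<Union>i\<in>I. P i) H = infdist q H"
      using dir_height_attained[OF fin] by blast
    have "infdist q H / \<alpha> \<le> dir_height (P i) H / \<alpha>"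
      using infdist_le_dir_height[OF assms(3)[OF i(1)] i(2)] assms(2) by (rule divide_right_mono)
    also have "\<dots> \<le> dir_height (C i) H"
      using assms(4)[OF i(1)] H by (simp add: approx_coreset_height_def)
    also have "\<dots> \<le> dir_height (\<Union>i\<in>I. C i) H"
      using fin_C i(1) by (intro dir_height_mono) auto
    finally show ?thesis
      using q by simp
  qed
qed

subsection \<open>Exchanging points into a height core-set\<close>

lemma approx_coreset_height_finite:
  "approx_coreset_height \<alpha> k C P \<Longrightarrow> finite P \<Longrightarrow> finite C"
  by (auto simp: approx_coreset_height_def finite_subset)

lemma gram_det_exchange_into_coreset:
  fixes C P :: "'a::euclidean_space set"
  assumes "0 < \<alpha>" "approx_coreset_height \<alpha> k C P" "finite P"
    and "x \<in> P" "0 < gram_det (x # ys)" "length ys = k - 1"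
  shows "\<exists>q\<in>C. gram_det (x # ys) / \<alpha>\<^sup>2 \<le> gram_det (q # ys)"
proof -
  let ?H = "span (set ys)"
  have ys: "0 < gram_det ys" and x: "0 < infdist x ?H"
    using assms(5) gram_det_nonneg[of ys] infdist_nonneg[of x ?H]
    by (auto simp: gram_det_Cons zero_less_mult_iff)
  have "dim ?H = k - 1"
    using dim_set_eq_length_if_gram_det_nonzero[of ys] ys assms(6) by (simp add: dim_span)
  then have "dir_height P ?H / \<alpha> \<le> dir_height C ?H"
    using assms(2) by (auto simp: approx_coreset_height_def)
  moreover have "infdist x ?H / \<alpha> \<le> dir_height P ?H / \<alpha>"
    using infdist_le_dir_height[OF assms(3,4)] assms(1) by (simp add: divide_right_mono)
  ultimately have x_le: "infdist x ?H / \<alpha> \<le> dir_height C ?H"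
    by linarith
  have "finite C"
    using approx_coreset_height_finite[OF assms(2,3)] .
  have "C \<noteq> {}"
  proof
    assume "C = {}"
    then have "dir_height C ?H = 0"
      by (simp add: dir_height_def)
    moreover have "0 < infdist x ?H / \<alpha>"
      using x assms(1) by simp
    ultimately show False
      using x_le by linarith
  qed
  then obtain q where q: "q \<in> C" "dir_height C ?H = infdist q ?H"
    using dir_height_attained[OF \<open>finite C\<close>] by blast
  have "(infdist x ?H / \<alpha>)\<^sup>2 \<le> (infdist q ?H)\<^sup>2"
    using x_le q(2) x assms(1) by (intro power_mono) auto
  then have "(infdist x ?H / \<alpha>)\<^sup>2 * gram_det ys \<le> (infdist q ?H)\<^sup>2 * gram_det ys"
    using ys by (simp add: mult_right_mono)
  moreover have "(infdist x ?H / \<alpha>)\<^sup>2 * gram_det ys = gram_det (x # ys) / \<alpha>\<^sup>2"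
    by (simp add: gram_det_Cons power_divide)
  ultimately show ?thesis
    using q(1) by (auto simp: gram_det_Cons)
qed

lemma gram_det_exchange_list_into_coreset:
  fixes C P :: "'a::euclidean_space set"
  assumes "0 < \<alpha>" "approx_coreset_height \<alpha> k C P" "finite P"
  shows "length (as @ bs) = k \<Longrightarrow> set as \<subseteq> P \<Longrightarrow> set bs \<subseteq> C \<Longrightarrow> 0 < gram_det (as @ bs) \<Longrightarrow>
    \<exists>zs. set zs \<subseteq> C \<and> length zs = k \<and> gram_det (as @ bs) / \<alpha> ^ (2 * length as) \<le> gram_det zs"
proof (induction as arbitrary: bs)
  case (Cons a as)
  obtain q where q: "q \<in> C" "gram_det (a # as @ bs) / \<alpha>\<^sup>2 \<le> gram_det (q # as @ bs)"
    using gram_det_exchange_into_coreset[OF assms, of a "as @ bs"] Cons.prems by auto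
  have rotate: "gram_det (as @ bs @ [q]) = gram_det (q # as @ bs)"
    by (rule gram_det_mset_eq) simp
  have "0 < gram_det (a # as @ bs) / \<alpha>\<^sup>2"
    using Cons.prems(4) assms(1) by simp
  then have "0 < gram_det (as @ bs @ [q])"
    using q(2) rotate by linarith
  then obtain zs where zs: "set zs \<subseteq> C" "length zs = k"
      "gram_det (as @ bs @ [q]) / \<alpha> ^ (2 * length as) \<le> gram_det zs"
    using Cons.IH[of "bs @ [q]"] Cons.prems q(1) by auto
  have "gram_det ((a # as) @ bs) / \<alpha> ^ (2 * length (a # as))
      = gram_det (a # as @ bs) / \<alpha>\<^sup>2 / \<alpha> ^ (2 * length as)"
    by (simp add: power_add power2_eq_square field_simps)
  also have "\<dots> \<le> gram_det zs"
    using divide_right_mono[OF q(2), of "\<alpha> ^ (2 * length as)"] zs(3) rotate assms(1) by simp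
  finally show ?case
    using zs by blast
qed auto

lemma maxdet_approx_coreset_height:
  fixes C P :: "'a::euclidean_space set"
  assumes "0 < \<alpha>" "approx_coreset_height \<alpha> k C P" "finite P"
  shows "maxdet k P / \<alpha> ^ (2 * k) \<le> maxdet k C"
proof (cases "maxdet k P = 0")
  case True
  then show ?thesis
    using maxdet_nonneg[OF approx_coreset_height_finite[OF assms(2,3)]] by simp
next
  case False
  then obtain xs where xs: "set xs \<subseteq> P" "length xs = k" "maxdet k P = gram_det xs"
    using maxdet_attained[OF assms(3)] by blast
  then have "0 < gram_det xs"
    using False gram_det_nonneg[of xs] by simp
  then obtain zs where zs: "set zs \<subseteq> C" "length zs = k" "gram_det xs / \<alpha> ^ (2 * k) \<le> gram_det zs"
    using gram_det_exchange_list_into_coreset[OF assms, of xs "[]"] xs by auto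
  moreover have "0 < gram_det xs / \<alpha> ^ (2 * k)"
    using \<open>0 < gram_det xs\<close> assms(1) by simp
  ultimately have "distinct zs"
    by (intro distinct_if_gram_det_nonzero) linarith
  then have "gram_det zs \<le> maxdet k C"
    using gram_det_le_maxdet[OF approx_coreset_height_finite[OF assms(2,3)]] zs by blast
  then show ?thesis
    using zs(3) xs(3) by simp
qed

theorem corollary3p4:
  fixes c :: "'a::euclidean_space set \<Rightarrow> 'a set" and k :: nat and \<alpha> :: real
  assumes "1 \<le> k" and "k \<le> DIM('a)" and "\<alpha> \<ge> 1"
    and "\<And>P. finite P \<Longrightarrow> c P \<subseteq> P \<and> approx_coreset_height \<alpha> k (c P) P"
  shows "\<forall>m::nat. m \<ge> 1 \<longrightarrow> (\<forall>Ps :: nat \<Rightarrow> 'a set. (\<forall>i<m. finite (Ps i)) \<longrightarrow>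
           maxdet k (\<Union>i<m. c (Ps i)) \<ge> maxdet k (\<Union>i<m. Ps i) / \<alpha> ^ (2 * k))"
proof (intro allI impI)
  fix m :: nat and Ps :: "nat \<Rightarrow> 'a set"
  assume fin: "\<forall>i<m. finite (Ps i)"
  have "approx_coreset_height \<alpha> k (\<Union>i<m. c (Ps i)) (\<Union>i<m. Ps i)"
    using assms(3,4) fin by (intro approx_coreset_height_UN) auto
  then show "maxdet k (\<Union>i<m. Ps i) / \<alpha> ^ (2 * k) \<le> maxdet k (\<Union>i<m. c (Ps i))"
    using assms(3) fin by (intro maxdet_approx_coreset_height) auto
qed

end
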